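(* Let $m\ge2$ and let $G$ be the group of type $D_1$. Then the distinct non-identity normal subgroups of $G$ are exactly: (i) $\langle t^{2^{\alpha}},x\rangle$, $\langle t^{2^{\alpha}},y\rangle$, $\langle t^{2^{\alpha}},xy\rangle$, $\langle t^{2^{\alpha}},x,y\rangle$ for $0\le\alpha\le m-1$; (ii) $\langle t^{2^{\beta}}x\rangle$, $\langle t^{2^{\beta}}y\rangle$, $\langle t^{2^{m-1}},t^{2^{\beta}}xy\rangle$, $\langle t^{2^{m-1}},x,t^{2^{\beta}}y\rangle$, $\langle t^{2^{m-1}},t^{2^{\beta}}x,y\rangle$, $\langle t^{2^{\beta}}x,t^{2^{\beta}}y\rangle$ for $0\le\beta\le m-2$; (iii) $\langle t^{2^{\gamma}}\rangle$ for $0\le\gamma\le m-1$.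
   Context: The group of type $D_1$ (with parameter $m\ge1$) is $G=\langle x,y,t\mid x^2=y^2=t^{2^m}=1,\ y^{-1}x^{-1}yx\,t^{2^{m-1}}=1,\ t \text{ central}\rangle$, of order $2^{m+2}$. *)

theory Defs
  imports "HOL-Algebra.Coset" "HOL-Algebra.Generated_Groups"
begin

definition D1_normal_list :: "('a, 'b) monoid_scheme \<Rightarrow> nat \<Rightarrow> 'a \<Rightarrow> 'a \<Rightarrow> 'a \<Rightarrow> 'a set list" where
  "D1_normal_list G m x y t =
    (let T = (\<lambda>k::nat. t [^]\<^bsub>G\<^esub> ((2::nat) ^ k));
         z = T (m - 1);
         mul = (\<lambda>a b. a \<otimes>\<^bsub>G\<^esub> b);
         gen = generate G
     in concat (map (\<lambda>a. [gen {T a, x}, gen {T a, y}, gen {T a, mul x y}, gen {T a, x, y}]) [0..<m])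
        @ concat (map (\<lambda>b. [gen {mul (T b) x}, gen {mul (T b) y},
                             gen {z, mul (mul (T b) x) y},
                             gen {z, x, mul (T b) y},
                             gen {z, mul (T b) x, y},
                             gen {mul (T b) x, mul (T b) y}]) [0..<m - 1])
        @ map (\<lambda>c. gen {T c}) [0..<m])"

end

theory Submission
  imports Defs "HOL-Computational_Algebra.Primes"
begin

text \<open>
  Every element of G is t^i x^a y^b for a unique i mod 2^m and bits a, b, and
  (t^i x^a y^b)(t^j x^c y^d) = t^(i + j + 2^(m-1) b c) x^(a+c) y^(b+d).
  A subgroup H meets <t> in <t^(2^e)>, its image P in G/<t> = (Z/2)^2 is a subgroup, and over each
  point of P the exponents i of its elements form a coset of 2^e Z. If H is normal and nontrivial,
  conjugation by x and y shifts exponents by 2^(m-1), which forces e < m; squaring then shows that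
  each coset is 2^e Z or 2^(e-1) + 2^e Z, and which of the two occurs is additive on P. The eleven
  possible pairs of P and such an additive choice are the eleven families of the list, and each
  listed generating set generates the subgroup with the matching data.
\<close>

lemma int_additive_subgroup_eq_multiples:
  fixes S :: "int set"
  assumes zero: "0 \<in> S"
    and add: "\<And>i j. i \<in> S \<Longrightarrow> j \<in> S \<Longrightarrow> i + j \<in> S"
    and neg: "\<And>i. i \<in> S \<Longrightarrow> - i \<in> S"
  obtains d where "\<And>i. i \<in> S \<longleftrightarrow> d dvd i"
proof -
  have mult_nat: "i * int n \<in> S" if "i \<in> S" for i n
    by (induction n) (use zero add that in \<open>simp_all add: distrib_left\<close>)
  have mult: "i * k \<in> S" if "i \<in> S" for i k
    using mult_nat[OF that, of "nat k"] neg[OF mult_nat[OF that, of "nat (- k)"]]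
    by (cases "0 \<le> k") auto
  show thesis
  proof (cases "S \<subseteq> {0}")
    case True
    then show thesis using zero by (intro that[of 0]) auto
  next
    case False
    then obtain i where "i \<in> S" "i \<noteq> 0" by blast
    then have pos: "0 < nat \<bar>i\<bar> \<and> int (nat \<bar>i\<bar>) \<in> S"
      using neg by (cases "0 \<le> i") auto
    define d where "d = (LEAST n. 0 < n \<and> int n \<in> S)"
    have d: "0 < d" "int d \<in> S"
      using LeastI_ex[of "\<lambda>n. 0 < n \<and> int n \<in> S"] pos unfolding d_def by blast+
    have "j \<in> S \<longleftrightarrow> int d dvd j" for j
    proof
      assume j: "j \<in> S"
      have "j + int d * (- (j div int d)) \<in> S"
        using add[OF j mult[OF d(2)]] by blast
      then have "j mod int d \<in> S"
        by (simp add: minus_div_mult_eq_mod [symmetric] algebra_simps)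
      moreover have "0 \<le> j mod int d" "j mod int d < int d" using d(1) by simp_all
      ultimately have "\<not> (0 < nat (j mod int d))"
        using not_less_Least[of "nat (j mod int d)" "\<lambda>n. 0 < n \<and> int n \<in> S"] unfolding d_def[symmetric]
        by auto
      then show "int d dvd j" using \<open>0 \<le> j mod int d\<close> by (simp add: dvd_eq_mod_eq_0)
    next
      assume "int d dvd j"
      then show "j \<in> S" using mult[OF d(2)] by (auto simp: dvd_def)
    qed
    then show thesis by (rule that)
  qed
qed

lemma xor_of_dvd_sum_of_halves:
  fixes h :: int
  assumes "0 < h" "2 * h dvd (if A then h else 0) + (if B then h else 0) + (if C then h else 0)"
  shows "C = (A \<noteq> B)"
proof -
  have "(if A then h else 0) + (if B then h else 0) + (if C then h else 0) =
      (of_bool A + of_bool B + of_bool C) * h"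
    by (simp add: distrib_right)
  then have "2 dvd (of_bool A + of_bool B + of_bool C :: int)"
    using assms by simp
  then show ?thesis by (cases A; cases B; cases C) simp_all
qed

section \<open>Shapes of subgroups\<close>

text \<open>A shape records the image of a subgroup in G/<t> = (Z/2)^2 (\<open>in_image\<close>) and the part of
  the image over which the exponents are offset by half the period of the kernel (\<open>twist\<close>).
  The untwisted shapes \<open>Along_x\<close>, ..., \<open>Full\<close> are family (i) of the list, the twisted ones
  family (ii), and \<open>Cyclic\<close> family (iii).\<close>

datatype shape =
  Cyclic | Along_x | Along_y | Along_xy | Full
  | Twisted_x | Twisted_y | Twisted_xy | Full_twisted_y | Full_twisted_x | Full_twisted_xy

fun in_image :: "shape \<Rightarrow> bool \<Rightarrow> bool \<Rightarrow> bool" where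
  "in_image Cyclic a b = (\<not> a \<and> \<not> b)"
| "in_image Along_x a b = (\<not> b)"
| "in_image Twisted_x a b = (\<not> b)"
| "in_image Along_y a b = (\<not> a)"
| "in_image Twisted_y a b = (\<not> a)"
| "in_image Along_xy a b = (a = b)"
| "in_image Twisted_xy a b = (a = b)"
| "in_image _ a b = True"

fun twist :: "shape \<Rightarrow> bool \<Rightarrow> bool \<Rightarrow> bool" where
  "twist Twisted_x a b = a"
| "twist Twisted_y a b = b"
| "twist Twisted_xy a b = a"
| "twist Full_twisted_y a b = b"
| "twist Full_twisted_x a b = a"
| "twist Full_twisted_xy a b = (a \<noteq> b)"
| "twist _ a b = False"

fun twisted :: "shape \<Rightarrow> bool" where
  "twisted Cyclic = False"
| "twisted Along_x = False"
| "twisted Along_y = False"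
| "twisted Along_xy = False"
| "twisted Full = False"
| "twisted _ = True"

lemma twisted_iff: "twisted s \<longleftrightarrow> (\<exists>a b. in_image s a b \<and> twist s a b)"
  by (cases s) (auto simp: ex_bool_eq)

lemma in_image_xor:
  "in_image s a b \<Longrightarrow> in_image s c d \<Longrightarrow> in_image s (a \<noteq> c) (b \<noteq> d)"
  by (cases s) auto

lemma twist_xor:
  "in_image s a b \<Longrightarrow> in_image s c d \<Longrightarrow> twist s (a \<noteq> c) (b \<noteq> d) = (twist s a b \<noteq> twist s c d)"
  by (cases s) auto

lemma shape_of_image_twist:
  fixes p w :: "bool \<Rightarrow> bool \<Rightarrow> bool"
  assumes "p False False" "\<not> w False False"
    and p_xor: "\<And>a b c d. p a b \<Longrightarrow> p c d \<Longrightarrow> p (a \<noteq> c) (b \<noteq> d)"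
    and w_xor: "\<And>a b c d. p a b \<Longrightarrow> p c d \<Longrightarrow> w (a \<noteq> c) (b \<noteq> d) = (w a b \<noteq> w c d)"
  shows "\<exists>s. p = in_image s \<and> (\<forall>a b. p a b \<longrightarrow> w a b = twist s a b)"
proof -
  have "p True True" "w True True = (w True False \<noteq> w False True)" if "p True False" "p False True"
    using p_xor[OF that] w_xor[OF that] by simp_all
  moreover have "p False True" if "p True False" "p True True"
    using p_xor[OF that] by simp
  moreover have "p True False" if "p False True" "p True True"
    using p_xor[OF that] by simp
  ultimately consider
      (full) "p True False" "p False True" "p True True"
      "w True True = (w True False \<noteq> w False True)"
    | (x) "p True False" "\<not> p False True" "\<not> p True True"
    | (y) "\<not> p True False" "p False True" "\<not> p True True"
    | (xy) "\<not> p True False" "\<not> p False True" "p True True"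
    | (cyclic) "\<not> p True False" "\<not> p False True" "\<not> p True True"
    by blast
  then show ?thesis
  proof cases
    case full
    show ?thesis
      by (rule exI[of _ "if w True False then if w False True then Full_twisted_xy else Full_twisted_x
                         else if w False True then Full_twisted_y else Full"])
        (use full assms(1,2) in \<open>auto simp: fun_eq_iff all_bool_eq\<close>)
  next
    case x
    show ?thesis
      by (rule exI[of _ "if w True False then Twisted_x else Along_x"])
        (use x assms(1,2) in \<open>auto simp: fun_eq_iff all_bool_eq\<close>)
  next
    case y
    show ?thesis
      by (rule exI[of _ "if w False True then Twisted_y else Along_y"])
        (use y assms(1,2) in \<open>auto simp: fun_eq_iff all_bool_eq\<close>)
  next
    case xy
    show ?thesis
      by (rule exI[of _ "if w True True then Twisted_xy else Along_xy"])
        (use xy assms(1,2) in \<open>auto simp: fun_eq_iff all_bool_eq\<close>)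
  next
    case cyclic
    show ?thesis
      by (rule exI[of _ Cyclic]) (use cyclic assms(1,2) in \<open>auto simp: fun_eq_iff all_bool_eq\<close>)
  qed
qed

lemma shape_eqI:
  assumes "in_image s = in_image s'" "\<And>a b. in_image s a b \<Longrightarrow> twist s a b = twist s' a b"
  shows "s = s'"
  using assms by (cases s; cases s') (auto simp: fun_eq_iff all_bool_eq)

text \<open>Membership of t^i x^a y^b in the subgroup that meets <t> in <t^(2^e)> and has shape \<open>s\<close>.\<close>

definition in_shape :: "nat \<Rightarrow> shape \<Rightarrow> int \<Rightarrow> bool \<Rightarrow> bool \<Rightarrow> bool" where
  "in_shape e s i a b \<longleftrightarrow> in_image s a b \<and> 2 ^ e dvd i + (if twist s a b then 2 ^ (e - 1) else 0)"

text \<open>For \<open>e = 0\<close> a twist changes nothing, hence the condition \<open>0 < e\<close> on twisted shapes.\<close>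

definition valid_shape :: "nat \<Rightarrow> nat \<Rightarrow> shape \<Rightarrow> bool" where
  "valid_shape m e s \<longleftrightarrow> e < m \<and> (twisted s \<longrightarrow> 0 < e)"

definition shape_params :: "nat \<Rightarrow> (nat \<times> shape) list" where
  "shape_params m =
     concat (map (\<lambda>e. map (Pair e) [Along_x, Along_y, Along_xy, Full]) [0..<m])
   @ concat (map (\<lambda>b. map (Pair (Suc b))
       [Twisted_x, Twisted_y, Twisted_xy, Full_twisted_y, Full_twisted_x, Full_twisted_xy]) [0..<m - 1])
   @ map (\<lambda>e. (e, Cyclic)) [0..<m]"

lemma distinct_shape_params: "distinct (shape_params m)"
  unfolding shape_params_def by (auto simp: distinct_map inj_on_def intro!: distinct_concat)

lemma set_shape_params: "set (shape_params m) = {(e, s). valid_shape m e s}"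
proof -
  have pairs: "set (concat (map (\<lambda>e. map (Pair (f e)) L) xs)) = f ` set xs \<times> set L"
    for f :: "nat \<Rightarrow> nat" and L :: "shape list" and xs by auto
  have "(e, s) \<in> set (shape_params m) \<longleftrightarrow> valid_shape m e s" for e s
  proof (cases "twisted s")
    case True
    then have "(e, s) \<in> set (shape_params m) \<longleftrightarrow> (\<exists>b < m - 1. e = Suc b)"
      unfolding shape_params_def pairs by (cases s) auto
    also have "\<dots> \<longleftrightarrow> valid_shape m e s"
      using True unfolding valid_shape_def by (cases e) auto
    finally show ?thesis .
  next
    case False
    then show ?thesis
      unfolding shape_params_def pairs valid_shape_def by (cases s) auto
  qed
  then show ?thesis by auto
qed

lemma in_shape_False_False [simp]: "in_shape e s i False False \<longleftrightarrow> 2 ^ e dvd i"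
  unfolding in_shape_def by (cases s) auto

lemma in_shape_shift: "2 ^ e dvd k \<Longrightarrow> in_shape e s (i + k) a b = in_shape e s i a b"
  unfolding in_shape_def by (metis (no_types) add.commute add.left_commute dvd_add_right_iff)

lemma in_shape_add:
  assumes "in_shape e s i a b" "in_shape e s j c d"
  shows "in_shape e s (i + j) (a \<noteq> c) (b \<noteq> d)"
proof (cases e)
  case 0
  then show ?thesis using assms in_image_xor by (simp add: in_shape_def)
next
  case (Suc k)
  then have e: "(2::int) ^ e = 2 * 2 ^ k" "e - 1 = k" by simp_all
  let ?h = "\<lambda>u. if u then (2::int) ^ k else 0"
  have "2 * 2 ^ k dvd (i + ?h (twist s a b)) + (j + ?h (twist s c d))"
    using assms unfolding in_shape_def e by simp
  moreover have "(i + ?h (twist s a b)) + (j + ?h (twist s c d)) =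
      (i + j + ?h (twist s a b \<noteq> twist s c d)) + (if twist s a b \<and> twist s c d then 2 * 2 ^ k else 0)"
    by auto
  ultimately have "2 * 2 ^ k dvd i + j + ?h (twist s a b \<noteq> twist s c d)"
    by (simp add: dvd_add_left_iff)
  then show ?thesis
    using assms in_image_xor twist_xor unfolding in_shape_def e by simp
qed

lemma in_shape_neg:
  assumes "in_shape e s i a b" shows "in_shape e s (- i) a b"
proof (cases "twist s a b \<and> 0 < e")
  case True
  then obtain k where e: "(2::int) ^ e = 2 * 2 ^ k" "e - 1 = k"
    by (cases e) auto
  then have "2 * 2 ^ k dvd 2 * 2 ^ k - (i + 2 ^ k)"
    using assms True by (intro dvd_diff) (simp_all add: in_shape_def)
  moreover have "2 * 2 ^ k - (i + 2 ^ k) = - i + (2::int) ^ k" by simp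
  ultimately show ?thesis
    using assms True unfolding in_shape_def e by simp
qed (use assms in \<open>auto simp: in_shape_def\<close>)

lemma in_shape_shift_pow: "e \<le> n \<Longrightarrow> in_shape e s (i + 2 ^ n * k) a b = in_shape e s i a b"
  by (intro in_shape_shift dvd_mult2 le_imp_power_dvd)

lemma in_shape_diff: "in_shape e s i a b \<Longrightarrow> in_shape e s j a b \<Longrightarrow> 2 ^ e dvd i - j"
  unfolding in_shape_def by (metis (no_types) add_diff_cancel_right dvd_diff)

lemma in_shape_inj:
  assumes "valid_shape m e s" "valid_shape m e' s'" "in_shape e s = in_shape e' s'"
  shows "e = e' \<and> s = s'"
proof -
  have same: "in_shape e s i a b \<longleftrightarrow> in_shape e' s' i a b" for i a b
    using assms(3) by simp
  have dvd_iff: "(2::int) ^ e dvd i \<longleftrightarrow> 2 ^ e' dvd i" for i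
    using same[of i False False] by simp
  have "(2::int) ^ e dvd 2 ^ e'" "(2::int) ^ e' dvd 2 ^ e"
    using dvd_iff[of "2 ^ e"] dvd_iff[of "2 ^ e'"] by auto
  then have e: "e' = e" by (simp add: dvd_power_iff)
  have "in_image s = in_image s' \<and> (\<forall>a b. in_image s a b \<longrightarrow> twist s a b = twist s' a b)"
  proof (cases e)
    case 0
    then have "\<not> twisted s" "\<not> twisted s'"
      using assms(1,2) e by (auto simp: valid_shape_def)
    moreover have "in_image s a b = in_image s' a b" for a b
      using same[of 0 a b] 0 e by (simp add: in_shape_def)
    ultimately show ?thesis
      by (auto simp: twisted_iff fun_eq_iff)
  next
    case (Suc k)
    then have p: "(2::int) ^ e = 2 * 2 ^ k" "e - 1 = k" by simp_all
    have half: "\<not> 2 * (2::int) ^ k dvd 2 ^ k" "2 * (2::int) ^ k dvd 2 ^ k + 2 ^ k"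
      by simp_all
    have "(in_image s a b \<and> \<not> twist s a b) = (in_image s' a b \<and> \<not> twist s' a b)"
      "(in_image s a b \<and> twist s a b) = (in_image s' a b \<and> twist s' a b)" for a b
      using same[of 0 a b] same[of "2 ^ k" a b] half
      unfolding in_shape_def e p by (auto split: if_splits)
    then show ?thesis by (auto simp: fun_eq_iff)
  qed
  then show ?thesis using e shape_eqI by blast
qed

section \<open>Normal subgroups in coordinates\<close>

text \<open>\<open>q i a b\<close> stands for t^i x^a y^b \<in> H with H normal: the assumptions are closure under the
  product and inverse formulas, t^(2^m) = 1, and invariance under conjugation by y and by x.\<close>

locale normal_membership =
  fixes m :: nat and q :: "int \<Rightarrow> bool \<Rightarrow> bool \<Rightarrow> bool"
  assumes m_pos: "0 < m"
    and q_one: "q 0 False False"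
    and q_mult: "\<And>i a b j c d. q i a b \<Longrightarrow> q j c d \<Longrightarrow>
      q (i + j + 2 ^ (m - 1) * (of_bool b * of_bool c)) (a \<noteq> c) (b \<noteq> d)"
    and q_inv: "\<And>i a b. q i a b \<Longrightarrow> q (- i + 2 ^ (m - 1) * (of_bool a * of_bool b)) a b"
    and q_period: "q (2 ^ m) False False"
    and q_conj_y: "\<And>i b. q i True b \<Longrightarrow> q (i + 2 ^ (m - 1)) True b"
    and q_conj_x: "\<And>i a. q i a True \<Longrightarrow> q (i + 2 ^ (m - 1)) a True"
begin

lemma two_pow_m: "(2::int) ^ m = 2 * 2 ^ (m - 1)"
  using m_pos by (cases m) auto

lemma kernel_eq_multiples:
  obtains e where "e \<le> m" "\<And>i. q i False False \<longleftrightarrow> 2 ^ e dvd i"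
proof -
  obtain d where d: "\<And>i. q i False False \<longleftrightarrow> d dvd i"
    using int_additive_subgroup_eq_multiples[of "{i. q i False False}"] q_one
      q_mult[of _ False False _ False False] q_inv[of _ False False]
    by auto
  have "nat \<bar>d\<bar> dvd 2 ^ m"
    using d q_period by simp
  then obtain e where "e \<le> m" "nat \<bar>d\<bar> = 2 ^ e"
    using divides_primepow_nat[OF two_is_prime_nat] by blast
  then have "d dvd i \<longleftrightarrow> 2 ^ e dvd i" for i
    by (metis nat_eq_numeral_power_cancel_iff abs_dvd_iff)
  then show thesis using that \<open>e \<le> m\<close> d by blast
qed

end

locale normal_membership_kernel = normal_membership +
  fixes e :: nat
  assumes kernel: "\<And>i. q i False False \<longleftrightarrow> 2 ^ e dvd i"
    and e_le: "e \<le> m"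
begin

lemma fibre_diff:
  assumes "q i a b" "q j a b" shows "2 ^ e dvd i - j"
proof -
  have "2 ^ e dvd (i - j) + 2 ^ m * (of_bool a * of_bool b)"
    using q_mult[OF assms(1) q_inv[OF assms(2)]] kernel by (simp add: two_pow_m algebra_simps)
  moreover have "(2::int) ^ e dvd 2 ^ m" using e_le by (simp add: le_imp_power_dvd)
  ultimately show ?thesis by (simp add: dvd_add_left_iff)
qed

lemma fibre_shift:
  assumes "q j a b" "2 ^ e dvd i - j" shows "q i a b"
  using q_mult[OF kernel[THEN iffD2, OF assms(2)] assms(1)] by simp

lemma exp_less_if_image:
  assumes "q i a b" "a \<or> b" shows "e < m"
proof -
  have "q (i + 2 ^ (m - 1)) a b" using assms q_conj_x q_conj_y by (cases a; cases b) auto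
  then have "(2::int) ^ e dvd 2 ^ (m - 1)" using fibre_diff[OF _ assms(1)] by fastforce
  then show ?thesis using m_pos by (simp add: dvd_power_iff)
qed

lemma exp_less_if_nontrivial:
  assumes "q i a b" "\<not> (2 ^ m dvd i \<and> \<not> a \<and> \<not> b)" shows "e < m"
  using assms exp_less_if_image kernel e_le by (cases "a \<or> b") (auto simp: le_less)

lemma fibre_eq:
  assumes "e < m" "q j a b"
  shows "q i a b \<longleftrightarrow> 2 ^ e dvd i + (if q 0 a b then 0 else 2 ^ (e - 1))"
proof (cases "q 0 a b")
  case True
  then show ?thesis using fibre_diff[OF _ True, of i] fibre_shift[OF True, of i] by auto
next
  case False
  then obtain k where k: "e = Suc k"
    using fibre_shift[OF assms(2), of 0] by (cases e) auto
  have "2 ^ e dvd j + j + 2 ^ (m - 1) * (of_bool b * of_bool a)"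
    using q_mult[OF assms(2) assms(2)] kernel by simp
  moreover have "(2::int) ^ e dvd 2 ^ (m - 1)" using assms(1) by (simp add: le_imp_power_dvd)
  ultimately have "2 ^ e dvd j + j"
    using dvd_add_left_iff dvd_mult2 by blast
  then have "2 * 2 ^ k dvd 2 * j" using k by (metis mult_2 power_Suc)
  then have "2 ^ k dvd j" by simp
  then obtain l where l: "j = 2 ^ k * l" by (rule dvdE)
  have "odd l"
  proof
    assume "even l"
    then have "2 ^ e dvd 0 - j" using k l by (auto elim!: evenE)
    then show False using False fibre_shift[OF assms(2)] by blast
  qed
  then have "2 ^ e dvd j + 2 ^ k" using k l by (auto elim!: oddE simp: algebra_simps)
  then have "2 ^ e dvd (i - j) + (j + 2 ^ k) \<longleftrightarrow> 2 ^ e dvd i - j"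
    by (rule dvd_add_left_iff)
  then show ?thesis using False k fibre_diff[OF _ assms(2)] fibre_shift[OF assms(2)] by auto
qed

lemma origin_in_fibre_xor:
  assumes "e < m" "q i a b" "q j c d"
  shows "q 0 (a \<noteq> c) (b \<noteq> d) \<longleftrightarrow> (q 0 a b \<longleftrightarrow> q 0 c d)"
proof (cases e)
  case 0
  then show ?thesis
    using fibre_shift[OF assms(2), of 0] fibre_shift[OF assms(3), of 0] fibre_shift[OF q_mult[OF assms(2,3)], of 0]
    by simp
next
  case (Suc k)
  then have k: "(2::int) ^ e = 2 * 2 ^ k" "e - 1 = k" by simp_all
  define w where "w u v \<longleftrightarrow> \<not> q 0 u v" for u v
  define h where "h u = (if u then (2::int) ^ k else 0)" for u
  have fibre: "q l u v \<longleftrightarrow> 2 * 2 ^ k dvd l + h (w u v)" if "q n u v" for l n u v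
  proof -
    have "q l u v \<longleftrightarrow> 2 ^ e dvd l + (if q 0 u v then 0 else 2 ^ (e - 1))"
      by (rule fibre_eq[OF assms(1) that])
    also have "\<dots> \<longleftrightarrow> 2 * 2 ^ k dvd l + h (w u v)"
      unfolding h_def w_def k by simp
    finally show ?thesis .
  qed
  define z where "z = (2::int) ^ (m - 1) * (of_bool b * of_bool c)"
  have "q (h (w a b)) a b" "q (h (w c d)) c d"
    using fibre[OF assms(2)] fibre[OF assms(3)] unfolding h_def by auto
  from q_mult[OF this, folded z_def]
  have "2 * 2 ^ k dvd (h (w a b) + h (w c d) + h (w (a \<noteq> c) (b \<noteq> d))) + z"
    unfolding fibre[OF q_mult[OF assms(2,3)]] by (simp add: ac_simps)
  moreover have "2 * 2 ^ k dvd z"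
    using assms(1) k(1)[symmetric] unfolding z_def by (simp add: le_imp_power_dvd)
  ultimately have "2 * 2 ^ k dvd h (w a b) + h (w c d) + h (w (a \<noteq> c) (b \<noteq> d))"
    by (simp add: dvd_add_left_iff)
  then have "w (a \<noteq> c) (b \<noteq> d) = (w a b \<noteq> w c d)"
    unfolding h_def by (rule xor_of_dvd_sum_of_halves[rotated]) simp
  then show ?thesis unfolding w_def by blast
qed

lemma membership_eq_in_shape:
  assumes "e < m"
  obtains s where "valid_shape m e s" "\<And>i a b. q i a b \<longleftrightarrow> in_shape e s i a b"
proof -
  define p where "p a b \<longleftrightarrow> (\<exists>i. q i a b)" for a b
  define w where "w a b \<longleftrightarrow> \<not> q 0 a b" for a b
  have fibre: "q i a b \<longleftrightarrow> 2 ^ e dvd i + (if w a b then 2 ^ (e - 1) else 0)" if ab: "p a b" for i a b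
  proof -
    obtain j where "q j a b" using ab unfolding p_def by blast
    from fibre_eq[OF assms this, of i] show ?thesis by (simp add: w_def)
  qed
  obtain s where s: "p = in_image s" "\<And>a b. p a b \<Longrightarrow> w a b = twist s a b"
    using shape_of_image_twist[of p w] q_one q_mult origin_in_fibre_xor[OF assms]
    unfolding p_def w_def by blast
  have "q i a b \<longleftrightarrow> in_shape e s i a b" for i a b
  proof (cases "p a b")
    case True
    then show ?thesis using fibre[OF True, of i] s by (simp add: in_shape_def)
  next
    case False
    then have "\<not> q i a b" unfolding p_def by blast
    then show ?thesis using False s(1) by (simp add: in_shape_def)
  qed
  moreover have "0 < e" if "twisted s"
  proof (rule ccontr)
    assume "\<not> 0 < e"
    moreover obtain a b where "p a b" "w a b"
      using \<open>twisted s\<close> s by (auto simp: twisted_iff)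
    ultimately show False using fibre[of a b 0] by (simp add: w_def)
  qed
  ultimately show thesis using that assms by (auto simp: valid_shape_def)
qed

end

section \<open>The group of type D1\<close>

lemma (in group) commute_inv:
  assumes "a \<in> carrier G" "g \<in> carrier G" "a \<otimes> g = g \<otimes> a"
  shows "inv a \<otimes> g = g \<otimes> inv a"
proof -
  have "inv a \<otimes> g = inv a \<otimes> (g \<otimes> a) \<otimes> inv a"
    using assms by (simp add: m_assoc)
  also have "\<dots> = inv a \<otimes> (a \<otimes> g) \<otimes> inv a"
    using assms(3) by simp
  also have "\<dots> = g \<otimes> inv a"
    using assms(1,2) by (simp add: m_assoc[symmetric])
  finally show ?thesis .
qed

lemma (in group) int_pow_commute:
  assumes "a \<in> carrier G" "g \<in> carrier G" "a \<otimes> g = g \<otimes> a"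
  shows "a [^] (i::int) \<otimes> g = g \<otimes> a [^] i"
proof (cases i rule: int_cases)
  case (nonneg n)
  then show ?thesis
    using group_commutes_pow[OF assms(3,1,2)] by (simp add: int_pow_int)
next
  case (neg n)
  then show ?thesis
    unfolding neg int_pow_neg_int[OF assms(1)] by (intro commute_inv nat_pow_closed group_commutes_pow assms)
qed

locale D1_group = group G for G (structure) +
  fixes x y t :: 'a and m :: nat
  assumes m_pos: "0 < m"
    and x_closed [simp]: "x \<in> carrier G" and y_closed [simp]: "y \<in> carrier G"
    and t_closed [simp]: "t \<in> carrier G"
    and x_square: "x [^] (2::nat) = \<one>" and y_square: "y [^] (2::nat) = \<one>"
    and t_order: "t [^] ((2::nat) ^ m) = \<one>"
    and commutator: "inv y \<otimes> inv x \<otimes> y \<otimes> x \<otimes> t [^] ((2::nat) ^ (m - 1)) = \<one>"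
    and t_central: "\<forall>g \<in> carrier G. t \<otimes> g = g \<otimes> t"
    and generated: "generate G {x, y, t} = carrier G"
    and order_G: "order G = 2 ^ (m + 2)"
begin

definition z :: 'a where "z = t [^] ((2::int) ^ (m - 1))"

lemma z_closed [simp]: "z \<in> carrier G"
  by (simp add: z_def)

lemma t_pow_commute: "g \<in> carrier G \<Longrightarrow> t [^] (i::int) \<otimes> g = g \<otimes> t [^] i"
  by (intro int_pow_commute t_closed bspec[OF t_central])

lemma t_pow_nat: "t [^] ((2::nat) ^ k) = t [^] ((2::int) ^ k)"
  by (metis int_pow_int of_nat_numeral of_nat_power)

lemma t_pow_period: "t [^] (i + 2 ^ m * k) = t [^] (i::int)"
proof -
  have "t [^] ((2::int) ^ m) = \<one>"
    using t_order unfolding t_pow_nat .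
  then show ?thesis
    by (simp add: int_pow_mult int_pow_pow[symmetric])
qed

lemma x_x [simp]: "x \<otimes> x = \<one>"
  using x_square by (simp add: numeral_2_eq_2)

lemma y_y [simp]: "y \<otimes> y = \<one>"
  using y_square by (simp add: numeral_2_eq_2)

lemma z_z [simp]: "z \<otimes> z = \<one>"
proof -
  have e: "(2::int) ^ (m - 1) + 2 ^ (m - 1) = 0 + 2 ^ m * 1"
    using m_pos by (cases m) auto
  have "z \<otimes> z = t [^] (0 + 2 ^ m * (1::int))"
    unfolding z_def int_pow_mult[OF t_closed, symmetric] e ..
  then show ?thesis unfolding t_pow_period by simp
qed

lemma x_cancel [simp]: "g \<in> carrier G \<Longrightarrow> x \<otimes> (x \<otimes> g) = g"
  by (simp flip: m_assoc)

lemma y_cancel [simp]: "g \<in> carrier G \<Longrightarrow> y \<otimes> (y \<otimes> g) = g"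
  by (simp flip: m_assoc)

lemma x_inv [simp]: "inv x = x" and y_inv [simp]: "inv y = y"
  by (simp_all add: inv_equality)

lemma y_x: "y \<otimes> x = x \<otimes> (y \<otimes> z)"
proof -
  have "y \<otimes> (x \<otimes> (y \<otimes> (x \<otimes> z))) = \<one>"
    using commutator by (simp add: m_assoc t_pow_nat z_def)
  then have "x \<otimes> (y \<otimes> (y \<otimes> (x \<otimes> (y \<otimes> (x \<otimes> z))))) = x \<otimes> y"
    by simp
  then have "y \<otimes> (x \<otimes> z) = x \<otimes> y"
    by simp
  then have "y \<otimes> (x \<otimes> z) \<otimes> z = x \<otimes> (y \<otimes> z)"
    by (simp add: m_assoc)
  then show ?thesis
    by (simp add: m_assoc)
qed

definition x_bit :: "bool \<Rightarrow> 'a" where "x_bit a = (if a then x else \<one>)"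
definition y_bit :: "bool \<Rightarrow> 'a" where "y_bit b = (if b then y else \<one>)"

definition elem :: "int \<Rightarrow> bool \<Rightarrow> bool \<Rightarrow> 'a" where
  "elem i a b = t [^] i \<otimes> x_bit a \<otimes> y_bit b"

lemma x_bit_closed [simp]: "x_bit a \<in> carrier G" and y_bit_closed [simp]: "y_bit b \<in> carrier G"
  and elem_closed [simp]: "elem i a b \<in> carrier G"
  by (simp_all add: x_bit_def y_bit_def elem_def)

lemma x_bit_mult: "x_bit a \<otimes> x_bit c = x_bit (a \<noteq> c)"
  by (simp add: x_bit_def)

lemma y_bit_mult: "y_bit b \<otimes> y_bit d = y_bit (b \<noteq> d)"
  by (simp add: y_bit_def)

lemma y_bit_x_bit: "y_bit b \<otimes> x_bit c = x_bit c \<otimes> y_bit b \<otimes> t [^] (2 ^ (m - 1) * (of_bool b * of_bool c) :: int)"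
  using y_x by (simp add: x_bit_def y_bit_def z_def m_assoc)

lemma bits_mult:
  "(x_bit a \<otimes> y_bit b) \<otimes> (x_bit c \<otimes> y_bit d) =
    t [^] (2 ^ (m - 1) * (of_bool b * of_bool c) :: int) \<otimes> (x_bit (a \<noteq> c) \<otimes> y_bit (b \<noteq> d))"
proof -
  let ?k = "2 ^ (m - 1) * (of_bool b * of_bool c) :: int"
  have "(x_bit a \<otimes> y_bit b) \<otimes> (x_bit c \<otimes> y_bit d) = x_bit a \<otimes> (y_bit b \<otimes> x_bit c) \<otimes> y_bit d"
    by (simp add: m_assoc)
  also have "\<dots> = (x_bit a \<otimes> x_bit c) \<otimes> (y_bit b \<otimes> y_bit d) \<otimes> t [^] ?k"
    by (simp add: y_bit_x_bit m_assoc t_pow_commute[of "y_bit d"])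
  also have "\<dots> = t [^] ?k \<otimes> (x_bit (a \<noteq> c) \<otimes> y_bit (b \<noteq> d))"
    by (simp add: x_bit_mult y_bit_mult t_pow_commute)
  finally show ?thesis .
qed

lemma elem_mult:
  "elem i a b \<otimes> elem j c d = elem (i + j + 2 ^ (m - 1) * (of_bool b * of_bool c)) (a \<noteq> c) (b \<noteq> d)"
proof -
  let ?u = "x_bit a \<otimes> y_bit b" and ?v = "x_bit c \<otimes> y_bit d"
  have "elem i a b \<otimes> elem j c d = t [^] i \<otimes> (?u \<otimes> t [^] j) \<otimes> ?v"
    by (simp add: elem_def m_assoc)
  also have "\<dots> = t [^] i \<otimes> (t [^] j \<otimes> ?u) \<otimes> ?v"
    by (simp only: t_pow_commute[of ?u, symmetric] m_closed x_bit_closed y_bit_closed)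
  also have "\<dots> = t [^] i \<otimes> t [^] j \<otimes> (?u \<otimes> ?v)"
    by (simp add: m_assoc)
  also have "\<dots> = elem (i + j + 2 ^ (m - 1) * (of_bool b * of_bool c)) (a \<noteq> c) (b \<noteq> d)"
    by (simp add: bits_mult elem_def int_pow_mult m_assoc)
  finally show ?thesis .
qed

lemma elem_period: "elem (i + 2 ^ m * k) a b = elem i a b"
  by (simp add: elem_def t_pow_period)

lemma elem_mod: "elem (i mod 2 ^ m) a b = elem i a b"
  using elem_period[of "i mod 2 ^ m" "i div 2 ^ m"] by simp

lemma elem_one: "elem 0 False False = \<one>"
  by (simp add: elem_def x_bit_def y_bit_def)

lemma elem_inv: "inv (elem i a b) = elem (- i + 2 ^ (m - 1) * (of_bool a * of_bool b)) a b"
proof (rule inv_equality)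
  have "(2::int) ^ (m - 1) + 2 ^ (m - 1) = 0 + 2 ^ m * 1"
    using m_pos by (cases m) auto
  then show "elem (- i + 2 ^ (m - 1) * (of_bool a * of_bool b)) a b \<otimes> elem i a b = \<one>"
    using elem_period[of 0 1 False False] by (simp add: elem_mult elem_one)
qed simp_all

lemma elem_conj: "\<exists>k. elem j c d \<otimes> elem i a b \<otimes> inv (elem j c d) = elem (i + 2 ^ (m - 1) * k) a b"
proof
  show "elem j c d \<otimes> elem i a b \<otimes> inv (elem j c d) =
      elem (i + 2 ^ (m - 1) * (of_bool d * of_bool a + of_bool c * of_bool d + of_bool (d \<noteq> b) * of_bool c)) a b"
    by (cases a; cases b; cases c; cases d) (simp_all add: elem_mult elem_inv algebra_simps)
qed

lemma elem_surj:
  assumes "g \<in> carrier G" obtains i a b where "g = elem i a b"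
proof -
  let ?E = "{elem i a b | i a b. True}"
  have "subgroup ?E G"
  proof
    show "\<one> \<in> ?E" using elem_one[symmetric] by blast
  next
    fix g h assume "g \<in> ?E" "h \<in> ?E"
    then show "g \<otimes> h \<in> ?E" by (force simp: elem_mult)
  next
    fix g assume "g \<in> ?E"
    then show "inv g \<in> ?E" by (force simp: elem_inv)
  qed auto
  moreover have "x = elem 0 True False" "y = elem 0 False True" "t = elem 1 False False"
    by (simp_all add: elem_def x_bit_def y_bit_def)
  then have "{x, y, t} \<subseteq> ?E" by blast
  ultimately have "carrier G \<subseteq> ?E"
    using generate_subgroup_incl generated by metis
  then show thesis using assms that by blast
qed

lemma inj_on_elem: "inj_on (\<lambda>(i, a, b). elem i a b) ({0..<2 ^ m} \<times> UNIV)"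
proof (rule eq_card_imp_inj_on)
  have "carrier G \<subseteq> (\<lambda>(i, a, b). elem i a b) ` ({0..<2 ^ m} \<times> UNIV)"
  proof
    fix g assume "g \<in> carrier G"
    then obtain i a b where "g = elem i a b" by (rule elem_surj)
    then have "g = elem (i mod 2 ^ m) a b" by (simp add: elem_mod)
    then show "g \<in> (\<lambda>(i, a, b). elem i a b) ` ({0..<2 ^ m} \<times> UNIV)"
      by (auto intro!: image_eqI[where x = "(i mod 2 ^ m, a, b)"])
  qed
  then have "(\<lambda>(i, a, b). elem i a b) ` ({0..<2 ^ m} \<times> UNIV) = carrier G" by auto
  moreover have "card ({0..<(2::int) ^ m} \<times> (UNIV :: (bool \<times> bool) set)) = 2 ^ (m + 2)"
    by (simp add: card_cartesian_product nat_power_eq power_add flip: UNIV_Times_UNIV)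
  ultimately show "card ((\<lambda>(i, a, b). elem i a b) ` ({0..<2 ^ m} \<times> UNIV)) = card ({0..<(2::int) ^ m} \<times> (UNIV :: (bool \<times> bool) set))"
    using order_G by (simp add: order_def)
qed simp

lemma elem_eq_iff: "elem i a b = elem j c d \<longleftrightarrow> 2 ^ m dvd i - j \<and> a = c \<and> b = d"
proof
  assume "elem i a b = elem j c d"
  then have "elem (i mod 2 ^ m) a b = elem (j mod 2 ^ m) c d" by (simp add: elem_mod)
  then have "(i mod 2 ^ m, a, b) = (j mod 2 ^ m, c, d)"
    by (intro inj_onD[OF inj_on_elem]) simp_all
  then show "2 ^ m dvd i - j \<and> a = c \<and> b = d" by (simp add: mod_eq_dvd_iff)
next
  assume "2 ^ m dvd i - j \<and> a = c \<and> b = d"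
  then have "i mod 2 ^ m = j mod 2 ^ m" "a = c" "b = d" by (simp_all add: mod_eq_dvd_iff)
  then have "elem (i mod 2 ^ m) a b = elem (j mod 2 ^ m) c d" by simp
  then show "elem i a b = elem j c d" by (simp only: elem_mod)
qed

definition shape_subgroup :: "nat \<Rightarrow> shape \<Rightarrow> 'a set" where
  "shape_subgroup e s = {elem i a b | i a b. in_shape e s i a b}"

lemma elem_in_shape_subgroupI: "in_shape e s i a b \<Longrightarrow> elem i a b \<in> shape_subgroup e s"
  unfolding shape_subgroup_def by blast

lemma elem_in_shape_subgroup_iff:
  assumes "e \<le> m" shows "elem i a b \<in> shape_subgroup e s \<longleftrightarrow> in_shape e s i a b"
proof
  assume "elem i a b \<in> shape_subgroup e s"
  then obtain j where j: "in_shape e s j a b" "2 ^ m dvd i - j"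
    by (auto simp: shape_subgroup_def elem_eq_iff)
  then obtain k where "i = j + 2 ^ m * k" by (metis dvdE diff_add_cancel add.commute)
  then show "in_shape e s i a b" using j(1) in_shape_shift_pow[OF assms] by simp
qed (rule elem_in_shape_subgroupI)

lemma shape_subgroup_subgroup:
  assumes "e < m" shows "subgroup (shape_subgroup e s) G"
proof
  show "shape_subgroup e s \<subseteq> carrier G" by (auto simp: shape_subgroup_def)
  show "\<one> \<in> shape_subgroup e s"
    using elem_in_shape_subgroupI[of e s 0 False False] by (simp add: elem_one)
next
  have shift: "in_shape e s (i + 2 ^ (m - 1) * k) a b = in_shape e s i a b" for i k a b
    using assms by (intro in_shape_shift_pow) simp
  fix g h assume "g \<in> shape_subgroup e s" "h \<in> shape_subgroup e s"
  then obtain i a b j c d where g: "g = elem i a b" "in_shape e s i a b"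
    and h: "h = elem j c d" "in_shape e s j c d"
    unfolding shape_subgroup_def by blast
  have "in_shape e s (i + j + 2 ^ (m - 1) * (of_bool b * of_bool c)) (a \<noteq> c) (b \<noteq> d)"
    by (simp only: shift) (rule in_shape_add[OF g(2) h(2)])
  then show "g \<otimes> h \<in> shape_subgroup e s"
    unfolding g(1) h(1) elem_mult by (rule elem_in_shape_subgroupI)
next
  have shift: "in_shape e s (i + 2 ^ (m - 1) * k) a b = in_shape e s i a b" for i k a b
    using assms by (intro in_shape_shift_pow) simp
  fix g assume "g \<in> shape_subgroup e s"
  then obtain i a b where g: "g = elem i a b" "in_shape e s i a b"
    unfolding shape_subgroup_def by blast
  have "in_shape e s (- i + 2 ^ (m - 1) * (of_bool a * of_bool b)) a b"
    by (simp only: shift) (rule in_shape_neg[OF g(2)])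
  then show "inv g \<in> shape_subgroup e s"
    unfolding g(1) elem_inv by (rule elem_in_shape_subgroupI)
qed

lemma shape_subgroup_normal:
  assumes "e < m" shows "shape_subgroup e s \<lhd> G"
  unfolding normal_inv_iff
proof (intro conjI ballI shape_subgroup_subgroup[OF assms])
  fix g h assume "g \<in> carrier G" "h \<in> shape_subgroup e s"
  moreover from \<open>g \<in> carrier G\<close> obtain j c d where "g = elem j c d" by (rule elem_surj)
  moreover from \<open>h \<in> shape_subgroup e s\<close> obtain i a b where "h = elem i a b" "in_shape e s i a b"
    unfolding shape_subgroup_def by blast
  moreover obtain k where "elem j c d \<otimes> elem i a b \<otimes> inv (elem j c d) = elem (i + 2 ^ (m - 1) * k) a b"
    using elem_conj by blast
  moreover have "in_shape e s (i + 2 ^ (m - 1) * k) a b = in_shape e s i a b"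
    using assms by (intro in_shape_shift_pow) simp
  ultimately show "g \<otimes> h \<otimes> inv g \<in> shape_subgroup e s"
    by (simp add: elem_in_shape_subgroupI)
qed

lemma shape_subgroup_nontrivial:
  assumes "e < m" shows "shape_subgroup e s \<noteq> {\<one>}"
proof -
  have "\<not> (2::int) ^ m dvd 2 ^ e - 0"
    using assms by (simp add: dvd_power_iff)
  then have "elem (2 ^ e) False False \<noteq> \<one>"
    by (simp add: elem_one[symmetric] elem_eq_iff)
  moreover have "elem (2 ^ e) False False \<in> shape_subgroup e s"
    by (simp add: elem_in_shape_subgroupI)
  ultimately show ?thesis by blast
qed

lemma shape_subgroup_inj:
  assumes "valid_shape m e s" "valid_shape m e' s'" "shape_subgroup e s = shape_subgroup e' s'"
  shows "e = e' \<and> s = s'"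
proof (rule in_shape_inj[OF assms(1,2)])
  have "e \<le> m" "e' \<le> m" using assms(1,2) by (auto simp: valid_shape_def)
  then have "in_shape e s i a b = in_shape e' s' i a b" for i a b
    using elem_in_shape_subgroup_iff assms(3) by metis
  then show "in_shape e s = in_shape e' s'" by (simp add: fun_eq_iff)
qed

lemma normal_membership_elem:
  assumes "H \<lhd> G" shows "normal_membership m (\<lambda>i a b. elem i a b \<in> H)"
proof -
  interpret H: normal H G by (rule assms)
  have conj: "elem j c d \<otimes> elem i a b \<otimes> inv (elem j c d) \<in> H" if "elem i a b \<in> H" for i a b j c d
    using that H.inv_op_closed2 by (simp add: m_assoc)
  show ?thesis
  proof
    show "elem 0 False False \<in> H" by (simp add: elem_one)
    show "elem (2 ^ m) False False \<in> H" using elem_period[of 0 1] by (simp add: elem_one)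
  next
    fix i a b j c d assume "elem i a b \<in> H" "elem j c d \<in> H"
    then show "elem (i + j + 2 ^ (m - 1) * (of_bool b * of_bool c)) (a \<noteq> c) (b \<noteq> d) \<in> H"
      by (metis elem_mult H.m_closed)
  next
    fix i a b assume "elem i a b \<in> H"
    then show "elem (- i + 2 ^ (m - 1) * (of_bool a * of_bool b)) a b \<in> H"
      by (metis elem_inv H.m_inv_closed)
  next
    fix i b assume "elem i True b \<in> H"
    then show "elem (i + 2 ^ (m - 1)) True b \<in> H"
      using conj[of i True b 0 False True] by (cases b) (simp_all add: elem_mult elem_inv)
  next
    fix i a assume "elem i a True \<in> H"
    then show "elem (i + 2 ^ (m - 1)) a True \<in> H"
      using conj[of i a True 0 True False] by (cases a) (simp_all add: elem_mult elem_inv)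
  qed (rule m_pos)
qed

lemma normal_subgroup_eq_shape_subgroup:
  assumes "H \<lhd> G" "H \<noteq> {\<one>}"
  obtains e s where "valid_shape m e s" "H = shape_subgroup e s"
proof -
  let ?q = "\<lambda>i a b. elem i a b \<in> H"
  interpret H: normal H G by (rule assms(1))
  interpret normal_membership m ?q by (rule normal_membership_elem[OF assms(1)])
  obtain e where e: "e \<le> m" "\<And>i. ?q i False False \<longleftrightarrow> 2 ^ e dvd i"
    using kernel_eq_multiples by blast
  interpret normal_membership_kernel m ?q e by unfold_locales (use e in auto)
  have elem_H: "\<exists>i a b. h = elem i a b" if "h \<in> H" for h
    using elem_surj[OF H.mem_carrier[OF that]] by blast
  obtain h where h: "h \<in> H" "h \<noteq> \<one>" using assms(2) H.one_closed by blast
  then obtain i a b where "h = elem i a b" using elem_H by blast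
  with h have "?q i a b" "\<not> (2 ^ m dvd i \<and> \<not> a \<and> \<not> b)"
    by (auto simp: elem_eq_iff simp flip: elem_one)
  then have "e < m" by (rule exp_less_if_nontrivial)
  then obtain s where s: "valid_shape m e s" "\<And>i a b. ?q i a b \<longleftrightarrow> in_shape e s i a b"
    using membership_eq_in_shape by blast
  have "H = shape_subgroup e s"
  proof (intro equalityI subsetI)
    fix h assume "h \<in> H"
    with elem_H obtain i a b where "h = elem i a b" by blast
    with \<open>h \<in> H\<close> show "h \<in> shape_subgroup e s" by (simp add: s(2) elem_in_shape_subgroupI)
  next
    fix h assume "h \<in> shape_subgroup e s"
    then obtain i a b where "h = elem i a b" "in_shape e s i a b"
      unfolding shape_subgroup_def by blast
    then show "h \<in> H" by (simp add: s(2))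
  qed
  with s(1) show thesis by (rule that)
qed

lemma generate_eq_shape_subgroup:
  assumes "e < m" "S \<subseteq> shape_subgroup e s" "elem (2 ^ e) False False \<in> generate G S"
    and "in_image s True False \<Longrightarrow> in_shape e s ja True False \<and> elem ja True False \<in> generate G S"
    and "in_image s False True \<Longrightarrow> in_shape e s jb False True \<and> elem jb False True \<in> generate G S"
    and "in_image s True True \<Longrightarrow> in_shape e s jc True True \<and> elem jc True True \<in> generate G S"
  shows "generate G S = shape_subgroup e s"
proof
  show "generate G S \<subseteq> shape_subgroup e s"
    by (rule generate_subgroup_incl[OF assms(2) shape_subgroup_subgroup[OF assms(1)]])
  have S: "subgroup (generate G S) G"
    using assms(2) subgroup.subset[OF shape_subgroup_subgroup[OF assms(1)]]
    by (intro generate_is_subgroup) blast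
  have witness: "\<exists>j. in_shape e s j a b \<and> elem j a b \<in> generate G S" if "in_image s a b" for a b
  proof (cases "a \<or> b")
    case False
    then show ?thesis using generate.one[of G S] by (intro exI[of _ 0]) (simp add: elem_one)
  qed (use that assms(4-6) in \<open>cases a; cases b; auto\<close>)
  show "shape_subgroup e s \<subseteq> generate G S"
  proof
    fix h assume "h \<in> shape_subgroup e s"
    then obtain i a b where h: "h = elem i a b" "in_shape e s i a b"
      unfolding shape_subgroup_def by blast
    then obtain j where j: "in_shape e s j a b" "elem j a b \<in> generate G S"
      using witness by (auto simp: in_shape_def)
    obtain l where "i - j = 2 ^ e * l" using in_shape_diff[OF h(2) j(1)] by (rule dvdE)
    then have "elem (i - j) False False = elem (2 ^ e) False False [^] l"
      by (simp add: elem_def x_bit_def y_bit_def int_pow_pow)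
    then have "elem (i - j) False False \<in> generate G S"
      using subgroup_int_pow_closed[OF S assms(3)] by simp
    from subgroup.m_closed[OF S this j(2)] show "h \<in> generate G S"
      by (simp add: h elem_mult)
  qed
qed

lemma generate_untwisted:
  assumes "e < m"
  shows "[generate G {t [^] (2::nat) ^ e, x}, generate G {t [^] (2::nat) ^ e, y},
          generate G {t [^] (2::nat) ^ e, x \<otimes> y}, generate G {t [^] (2::nat) ^ e, x, y}]
       = map (shape_subgroup e) [Along_x, Along_y, Along_xy, Full]"
proof -
  let ?T = "elem (2 ^ e) False False"
  have "generate G {?T, elem 0 True False} = shape_subgroup e Along_x"
    "generate G {?T, elem 0 False True} = shape_subgroup e Along_y"
    "generate G {?T, elem 0 True True} = shape_subgroup e Along_xy"
    by (rule generate_eq_shape_subgroup[OF assms, where ja = 0 and jb = 0 and jc = 0];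
        auto simp: in_shape_def intro: generate.incl elem_in_shape_subgroupI)+
  moreover have "generate G {?T, elem 0 True False, elem 0 False True} = shape_subgroup e Full"
  proof (rule generate_eq_shape_subgroup[OF assms, where ja = 0 and jb = 0 and jc = 0])
    have "elem 0 True False \<otimes> elem 0 False True \<in> generate G {?T, elem 0 True False, elem 0 False True}"
      by (intro generate.eng generate.incl) simp_all
    then show "in_image Full True True \<Longrightarrow>
        in_shape e Full 0 True True \<and> elem 0 True True \<in> generate G {?T, elem 0 True False, elem 0 False True}"
      by (simp add: elem_mult in_shape_def)
  qed (auto simp: in_shape_def intro: generate.incl elem_in_shape_subgroupI)
  ultimately show ?thesis by (simp add: t_pow_nat elem_def x_bit_def y_bit_def)
qed

lemma generate_cyclic:
  assumes "e < m" shows "generate G {t [^] (2::nat) ^ e} = shape_subgroup e Cyclic"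
proof -
  have "generate G {elem (2 ^ e) False False} = shape_subgroup e Cyclic"
    by (rule generate_eq_shape_subgroup[OF assms])
      (auto simp: in_shape_def intro: generate.incl elem_in_shape_subgroupI)
  then show ?thesis by (simp add: t_pow_nat elem_def x_bit_def y_bit_def)
qed

lemma elem_square_in_generate:
  assumes "elem (2 ^ k) a b \<in> S"
  shows "elem (2 ^ Suc k + 2 ^ (m - 1) * (of_bool b * of_bool a)) False False \<in> generate G S"
proof -
  have "elem (2 ^ k) a b \<otimes> elem (2 ^ k) a b \<in> generate G S"
    using assms by (intro generate.eng generate.incl)
  moreover have "elem (2 ^ k) a b \<otimes> elem (2 ^ k) a b =
      elem (2 ^ Suc k + 2 ^ (m - 1) * (of_bool b * of_bool a)) False False"
    by (simp add: elem_mult)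
  ultimately show ?thesis by simp
qed

lemma generate_twisted:
  assumes "b < m - 1"
  shows "[generate G {t [^] (2::nat) ^ b \<otimes> x}, generate G {t [^] (2::nat) ^ b \<otimes> y},
          generate G {t [^] (2::nat) ^ (m - 1), t [^] (2::nat) ^ b \<otimes> x \<otimes> y},
          generate G {t [^] (2::nat) ^ (m - 1), x, t [^] (2::nat) ^ b \<otimes> y},
          generate G {t [^] (2::nat) ^ (m - 1), t [^] (2::nat) ^ b \<otimes> x, y},
          generate G {t [^] (2::nat) ^ b \<otimes> x, t [^] (2::nat) ^ b \<otimes> y}]
       = map (shape_subgroup (Suc b)) [Twisted_x, Twisted_y, Twisted_xy, Full_twisted_y, Full_twisted_x,
           Full_twisted_xy]"
proof -
  have e: "Suc b < m" using assms by simp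
  let ?h = "(2::int) ^ b" and ?z = "elem (2 ^ (m - 1)) False False"
  have z: "(2::int) ^ Suc b dvd 2 ^ (m - 1)"
    using assms by (intro le_imp_power_dvd) simp
  have prod: "g \<otimes> g' \<in> generate G S" if "g \<in> S" "g' \<in> S" for g g' S
    using that by (intro generate.eng generate.incl)
  have "generate G {elem ?h True False} = shape_subgroup (Suc b) Twisted_x"
    by (rule generate_eq_shape_subgroup[OF e, where ja = ?h])
      (use elem_square_in_generate[of b True False] in \<open>auto simp: in_shape_def intro: generate.incl elem_in_shape_subgroupI\<close>)
  moreover have "generate G {elem ?h False True} = shape_subgroup (Suc b) Twisted_y"
    by (rule generate_eq_shape_subgroup[OF e, where jb = ?h])
      (use elem_square_in_generate[of b False True] in \<open>auto simp: in_shape_def intro: generate.incl elem_in_shape_subgroupI\<close>)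
  moreover have "generate G {?z, elem ?h True True} = shape_subgroup (Suc b) Twisted_xy"
  proof (rule generate_eq_shape_subgroup[OF e, where jc = ?h])
    have "elem (2 ^ Suc b + 2 ^ (m - 1)) False False \<in> generate G {?z, elem ?h True True}"
      using elem_square_in_generate[of b True True] by simp
    moreover have "inv ?z \<in> generate G {?z, elem ?h True True}" by (intro generate.inv) simp
    ultimately have "elem (2 ^ Suc b + 2 ^ (m - 1)) False False \<otimes> inv ?z \<in> generate G {?z, elem ?h True True}"
      by (rule generate.eng)
    then show "elem (2 ^ Suc b) False False \<in> generate G {?z, elem ?h True True}"
      by (simp add: elem_mult elem_inv)
  qed (use z in \<open>auto simp: in_shape_def intro: generate.incl elem_in_shape_subgroupI\<close>)
  moreover have "generate G {?z, elem 0 True False, elem ?h False True} = shape_subgroup (Suc b) Full_twisted_y"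
    by (rule generate_eq_shape_subgroup[OF e, where ja = 0 and jb = ?h and jc = ?h])
      (use elem_square_in_generate[of b False True] prod[of "elem 0 True False" _ "elem ?h False True"] z in
        \<open>auto simp: in_shape_def elem_mult intro: generate.incl elem_in_shape_subgroupI\<close>)
  moreover have "generate G {?z, elem ?h True False, elem 0 False True} = shape_subgroup (Suc b) Full_twisted_x"
    by (rule generate_eq_shape_subgroup[OF e, where ja = ?h and jb = 0 and jc = ?h])
      (use elem_square_in_generate[of b True False] prod[of "elem ?h True False" _ "elem 0 False True"] z in
        \<open>auto simp: in_shape_def elem_mult intro: generate.incl elem_in_shape_subgroupI\<close>)
  moreover have "generate G {elem ?h True False, elem ?h False True} = shape_subgroup (Suc b) Full_twisted_xy"
    by (rule generate_eq_shape_subgroup[OF e, where ja = ?h and jb = ?h and jc = "2 ^ Suc b"])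
      (use elem_square_in_generate[of b True False] prod[of "elem ?h True False" _ "elem ?h False True"] in
        \<open>auto simp: in_shape_def elem_mult intro: generate.incl elem_in_shape_subgroupI\<close>)
  ultimately show ?thesis by (simp add: t_pow_nat elem_def x_bit_def y_bit_def)
qed

lemma D1_normal_list_eq: "D1_normal_list G m x y t = map (\<lambda>(e, s). shape_subgroup e s) (shape_params m)"
proof -
  have "D1_normal_list G m x y t =
     concat (map (\<lambda>e. [generate G {t [^] (2::nat) ^ e, x}, generate G {t [^] (2::nat) ^ e, y},
                       generate G {t [^] (2::nat) ^ e, x \<otimes> y}, generate G {t [^] (2::nat) ^ e, x, y}]) [0..<m])
     @ concat (map (\<lambda>b. [generate G {t [^] (2::nat) ^ b \<otimes> x}, generate G {t [^] (2::nat) ^ b \<otimes> y},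
                       generate G {t [^] (2::nat) ^ (m - 1), t [^] (2::nat) ^ b \<otimes> x \<otimes> y},
                       generate G {t [^] (2::nat) ^ (m - 1), x, t [^] (2::nat) ^ b \<otimes> y},
                       generate G {t [^] (2::nat) ^ (m - 1), t [^] (2::nat) ^ b \<otimes> x, y},
                       generate G {t [^] (2::nat) ^ b \<otimes> x, t [^] (2::nat) ^ b \<otimes> y}]) [0..<m - 1])
     @ map (\<lambda>e. generate G {t [^] (2::nat) ^ e}) [0..<m]"
    unfolding D1_normal_list_def Let_def ..
  also have "\<dots> = concat (map (\<lambda>e. map (shape_subgroup e) [Along_x, Along_y, Along_xy, Full]) [0..<m])
     @ concat (map (\<lambda>b. map (shape_subgroup (Suc b))
         [Twisted_x, Twisted_y, Twisted_xy, Full_twisted_y, Full_twisted_x, Full_twisted_xy]) [0..<m - 1])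
     @ map (\<lambda>e. shape_subgroup e Cyclic) [0..<m]"
    by (intro arg_cong2[where f = "(@)"] arg_cong[where f = concat] map_cong refl
        generate_untwisted generate_twisted generate_cyclic) auto
  also have "\<dots> = map (\<lambda>(e, s). shape_subgroup e s) (shape_params m)"
    unfolding shape_params_def by (simp add: map_concat comp_def)
  finally show ?thesis .
qed

theorem D1_normal_subgroups:
  "distinct (D1_normal_list G m x y t) \<and> set (D1_normal_list G m x y t) = {H. H \<lhd> G \<and> H \<noteq> {\<one>}}"
proof
  have "inj_on (\<lambda>(e, s). shape_subgroup e s) (set (shape_params m))"
    unfolding set_shape_params inj_on_def using shape_subgroup_inj by auto
  then show "distinct (D1_normal_list G m x y t)"
    unfolding D1_normal_list_eq distinct_map using distinct_shape_params by blast
  show "set (D1_normal_list G m x y t) = {H. H \<lhd> G \<and> H \<noteq> {\<one>}}"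
  proof (intro equalityI subsetI)
    fix H assume "H \<in> set (D1_normal_list G m x y t)"
    then obtain e s where "valid_shape m e s" "H = shape_subgroup e s"
      unfolding D1_normal_list_eq set_map set_shape_params by auto
    then show "H \<in> {H. H \<lhd> G \<and> H \<noteq> {\<one>}}"
      using shape_subgroup_normal shape_subgroup_nontrivial by (simp add: valid_shape_def)
  next
    fix H assume "H \<in> {H. H \<lhd> G \<and> H \<noteq> {\<one>}}"
    then obtain e s where "valid_shape m e s" "H = shape_subgroup e s"
      using normal_subgroup_eq_shape_subgroup by blast
    then show "H \<in> set (D1_normal_list G m x y t)"
      unfolding D1_normal_list_eq set_map set_shape_params by force
  qed
qed

end

theorem lemma4:
  fixes G (structure) and x y t :: 'a and m :: nat
  assumes "m \<ge> 2"
    and "group G"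
    and "x \<in> carrier G" "y \<in> carrier G" "t \<in> carrier G"
    and "x [^] (2::nat) = \<one>" "y [^] (2::nat) = \<one>" "t [^] ((2::nat) ^ m) = \<one>"
    and "inv y \<otimes> inv x \<otimes> y \<otimes> x \<otimes> t [^] ((2::nat) ^ (m - 1)) = \<one>"
    and "\<forall>g \<in> carrier G. t \<otimes> g = g \<otimes> t"
    and "generate G {x, y, t} = carrier G"
    and "order G = 2 ^ (m + 2)"
  shows "distinct (D1_normal_list G m x y t) \<and>
         set (D1_normal_list G m x y t) = {H. normal H G \<and> H \<noteq> {\<one>}}"
proof -
  interpret D1_group G x y t m
    using assms by (intro D1_group.intro D1_group_axioms.intro) auto
  show ?thesis by (rule D1_normal_subgroups)
qed

end
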